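(* There exist absolute constants $c>0$ and $\alpha_0\in(0,1)$ such that for every $\alpha\in(0,\alpha_0]$ there exist a distribution $\mathcal D$ over $\mathcal X\times\{A,B\}\times\{0,1\}$, a hypothesis class $\mathcal H$ with an optimal Equal-Opportunity-constrained classifier $h^*\in\mathcal H$ on $\mathcal D$ (i.e. $h^*$ minimizes $\Pr_{\mathcal D}[h(x,z)\ne y]$ among $h\in\mathcal H$ satisfying Equal Opportunity on $\mathcal D$), and a malicious adversary of power $\alpha$, i.e. a distribution $\mathcal Q$ yielding $\widetilde{\mathcal D}=(1-\alpha)\mathcal D+\alpha\mathcal Q$, such that every hypothesis $\hat h$ (possibly randomized and not in $\mathcal H$, i.e. returned by an improper learner) satisfying Equal Opportunity on $\widetilde{\mathcal D}$ has $$\Big|\mathbb E_{\mathcal D}[\mathbf 1(\hat h(x,z)\ne y)]-\mathbb E_{\mathcal D}[\mathbf 1(h^*(x,z)\ne y)]\Big|\ge c\sqrt\alpha.$$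
   Context: Examples are triples (features $x$, group $z\in\{A,B\}$, label $y\in\{0,1\}$); hypotheses may depend on the group. Equal Opportunity on a distribution: $\Pr[h(x,z)=1\mid y=1,z=A]=\Pr[h(x,z)=1\mid y=1,z=B]$ (probabilities also over the hypothesis's randomness). *)

theory Defs
  imports "HOL-Probability.Probability"
begin

datatype grp = GA | GB

text \<open>Examples are triples (x, z, y) with features x :: nat, group z, label y :: bool
  (True = label 1).\<close>

type_synonym example = "nat \<times> grp \<times> bool"
type_synonym hyp = "nat \<Rightarrow> grp \<Rightarrow> bool pmf"

definition tpr :: "example pmf \<Rightarrow> hyp \<Rightarrow> grp \<Rightarrow> real" where
  "tpr D h g =
     measure_pmf.expectation D
        (\<lambda>(x, z, y). if z = g \<and> y then measure_pmf.prob (h x z) {True} else 0)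
     / measure_pmf.prob D {(x, z, y). z = g \<and> y}"

definition equal_opportunity :: "example pmf \<Rightarrow> hyp \<Rightarrow> bool" where
  "equal_opportunity D h \<longleftrightarrow> tpr D h GA = tpr D h GB"

definition err :: "example pmf \<Rightarrow> hyp \<Rightarrow> real" where
  "err D h = measure_pmf.expectation D
      (\<lambda>(x, z, y). measure_pmf.prob (h x z) {b. b \<noteq> y})"

definition mix_pmf :: "real \<Rightarrow> 'a pmf \<Rightarrow> 'a pmf \<Rightarrow> 'a pmf" where
  "mix_pmf a D Q = bind_pmf (bernoulli_pmf a) (\<lambda>b. if b then Q else D)"

end

theory Submission
  imports Defs
begin

text \<open>Under the clean distribution group B consists of positives at x = 0 (mass 1/2) and group A
  of positives at x = 0 (mass \<alpha>) and negatives at x = 1 (mass 1/2 - \<alpha>); accepting exactly x = 0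
  is error-free and satisfies Equal Opportunity, and it is optimal in the singleton class it
  forms. The adversary adds positives of group A at x = 1,
  so that after corruption about half of group A's positives sit at x = 1. If u, v, w are the
  acceptance probabilities of a classifier at (0, A), (1, A), (0, B), Equal Opportunity on the
  corrupted distribution reads w (2 - \<alpha>) = (1 - \<alpha>) u + v: the classifier either accepts the
  negatives at (1, A) or rejects about half of the positives of group B, and in both cases its
  error on the clean distribution is at least 1/4, a constant gap that dominates c sqrt \<alpha>.\<close>

lemma expectation_mix_pmf:
  fixes f :: "'a \<Rightarrow> real"
  assumes "0 \<le> a" "a \<le> 1" "\<And>x. \<bar>f x\<bar> \<le> B"
  shows "measure_pmf.expectation (mix_pmf a D Q) f
           = (1 - a) * measure_pmf.expectation D f + a * measure_pmf.expectation Q f"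
proof -
  have "measure_pmf.expectation (mix_pmf a D Q) f
          = (\<integral>b. measure_pmf.expectation (if b then Q else D) f \<partial>bernoulli_pmf a)"
    unfolding mix_pmf_def measure_pmf_bind
    by (rule integral_bind[where K="count_space UNIV" and B=B and B'=1])
       (auto simp: assms measure_pmf_in_subprob_algebra)
  then show ?thesis using assms by simp
qed

lemma measure_mix_pmf:
  assumes "0 \<le> a" "a \<le> 1"
  shows "measure_pmf.prob (mix_pmf a D Q) A
           = (1 - a) * measure_pmf.prob D A + a * measure_pmf.prob Q A"
  using expectation_mix_pmf[OF assms, of "indicator A" 1] by simp

lemma measure_pmf_False: "measure_pmf.prob p {False} = 1 - measure_pmf.prob p {True}"
proof -
  have "{False} = space (measure_pmf p) - {True}" by auto
  then show ?thesis using measure_pmf.prob_compl[of "{True}" p] by simp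
qed

definition positive_mass :: "example pmf \<Rightarrow> grp \<Rightarrow> real" where
  "positive_mass D g = measure_pmf.prob D {(x, z, y). z = g \<and> y}"

definition true_positive_mass :: "example pmf \<Rightarrow> hyp \<Rightarrow> grp \<Rightarrow> real" where
  "true_positive_mass D h g = measure_pmf.expectation D
     (\<lambda>(x, z, y). if z = g \<and> y then measure_pmf.prob (h x z) {True} else 0)"

lemma tpr_eq_true_positive_mass_div: "tpr D h g = true_positive_mass D h g / positive_mass D g"
  unfolding tpr_def true_positive_mass_def positive_mass_def ..

lemma positive_mass_mix_pmf:
  "0 \<le> a \<Longrightarrow> a \<le> 1 \<Longrightarrow>
     positive_mass (mix_pmf a D Q) g = (1 - a) * positive_mass D g + a * positive_mass Q g"
  unfolding positive_mass_def by (rule measure_mix_pmf)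

lemma true_positive_mass_mix_pmf:
  assumes "0 \<le> a" "a \<le> 1"
  shows "true_positive_mass (mix_pmf a D Q) h g
           = (1 - a) * true_positive_mass D h g + a * true_positive_mass Q h g"
  unfolding true_positive_mass_def by (rule expectation_mix_pmf[OF assms, where B=1]) auto

lemma err_mix_pmf:
  assumes "0 \<le> a" "a \<le> 1"
  shows "err (mix_pmf a D Q) h = (1 - a) * err D h + a * err Q h"
  unfolding err_def by (rule expectation_mix_pmf[OF assms, where B=1]) auto

lemma positive_mass_return_pmf: "positive_mass (return_pmf (x, z, y)) g = of_bool (z = g \<and> y)"
  unfolding positive_mass_def by (simp add: indicator_def)

lemma true_positive_mass_return_pmf:
  "true_positive_mass (return_pmf (x, z, y)) h g
     = (if z = g \<and> y then measure_pmf.prob (h x z) {True} else 0)"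
  unfolding true_positive_mass_def by simp

lemma err_return_pmf:
  "err (return_pmf (x, z, y)) h
     = (if y then 1 - measure_pmf.prob (h x z) {True} else measure_pmf.prob (h x z) {True})"
proof -
  have "{b. b \<noteq> y} = {\<not> y}" by auto
  then show ?thesis unfolding err_def by (simp add: measure_pmf_False)
qed

definition clean_dist :: "real \<Rightarrow> example pmf" where
  "clean_dist \<alpha> = mix_pmf (1/2)
     (mix_pmf (2 * \<alpha>) (return_pmf (1, GA, False)) (return_pmf (0, GA, True)))
     (return_pmf (0, GB, True))"

definition poison_dist :: "example pmf" where
  "poison_dist = return_pmf (1, GA, True)"

definition accept_zero :: hyp where
  "accept_zero x z = return_pmf (x = 0)"

lemma positive_mass_clean_dist:
  "0 \<le> \<alpha> \<Longrightarrow> \<alpha> \<le> 1/2 \<Longrightarrow> positive_mass (clean_dist \<alpha>) g = (if g = GA then \<alpha> else 1/2)"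
  unfolding clean_dist_def by (cases g) (simp_all add: positive_mass_mix_pmf positive_mass_return_pmf)

lemma err_clean_dist:
  assumes "0 \<le> \<alpha>" "\<alpha> \<le> 1/2"
  shows "err (clean_dist \<alpha>) h = \<alpha> * (1 - measure_pmf.prob (h 0 GA) {True})
     + (1/2 - \<alpha>) * measure_pmf.prob (h 1 GA) {True} + 1/2 * (1 - measure_pmf.prob (h 0 GB) {True})"
  using assms unfolding clean_dist_def
  by (simp add: err_mix_pmf err_return_pmf algebra_simps)

lemma tpr_poisoned_GA:
  assumes "0 \<le> \<alpha>" "\<alpha> \<le> 1/2"
  shows "tpr (mix_pmf \<alpha> (clean_dist \<alpha>) poison_dist) h GA
     = ((1 - \<alpha>) * \<alpha> * measure_pmf.prob (h 0 GA) {True} + \<alpha> * measure_pmf.prob (h 1 GA) {True})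
       / ((1 - \<alpha>) * \<alpha> + \<alpha>)"
  using assms unfolding tpr_eq_true_positive_mass_div clean_dist_def poison_dist_def
  by (simp add: true_positive_mass_mix_pmf positive_mass_mix_pmf
      true_positive_mass_return_pmf positive_mass_return_pmf algebra_simps)

lemma tpr_poisoned_GB:
  assumes "0 \<le> \<alpha>" "\<alpha> \<le> 1/2"
  shows "tpr (mix_pmf \<alpha> (clean_dist \<alpha>) poison_dist) h GB = measure_pmf.prob (h 0 GB) {True}"
  using assms unfolding tpr_eq_true_positive_mass_div clean_dist_def poison_dist_def
  by (simp add: true_positive_mass_mix_pmf positive_mass_mix_pmf
      true_positive_mass_return_pmf positive_mass_return_pmf)

lemma tpr_clean_dist_accept_zero:
  "0 < \<alpha> \<Longrightarrow> \<alpha> \<le> 1/2 \<Longrightarrow> tpr (clean_dist \<alpha>) accept_zero g = 1"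
  unfolding tpr_eq_true_positive_mass_div clean_dist_def accept_zero_def
  by (cases g) (simp_all add: true_positive_mass_mix_pmf positive_mass_mix_pmf
      true_positive_mass_return_pmf positive_mass_return_pmf)

lemma err_clean_dist_accept_zero: "0 \<le> \<alpha> \<Longrightarrow> \<alpha> \<le> 1/2 \<Longrightarrow> err (clean_dist \<alpha>) accept_zero = 0"
  by (simp add: err_clean_dist accept_zero_def)

lemma quarter_le_error_of_balanced_rates:
  fixes \<alpha> u v w :: real
  assumes "0 \<le> \<alpha>" "\<alpha> \<le> 1/4" "u \<le> 1" "0 \<le> v" "v \<le> 1" "w \<le> 1"
    and balanced: "w * (2 - \<alpha>) = (1 - \<alpha>) * u + v"
  shows "1/4 \<le> \<alpha> * (1 - u) + (1/2 - \<alpha>) * v + 1/2 * (1 - w)"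
proof -
  have "(1 - w) * (2 - \<alpha>) = (1 - \<alpha>) * (1 - u) + (1 - v)"
    using balanced by (simp add: algebra_simps)
  moreover have "(1 - w) * (2 - \<alpha>) \<le> (1 - w) * 2"
    using assms by (intro mult_left_mono) auto
  moreover have "0 \<le> (1 - \<alpha>) * (1 - u)" "0 \<le> \<alpha> * (1 - u)"
    using assms by simp_all
  moreover have "1/4 * v \<le> (1/2 - \<alpha>) * v"
    using assms by (intro mult_right_mono) auto
  ultimately show ?thesis by linarith
qed

lemma err_clean_dist_ge_if_equal_opportunity_poisoned:
  assumes "0 < \<alpha>" "\<alpha> \<le> 1/4"
    and fair: "equal_opportunity (mix_pmf \<alpha> (clean_dist \<alpha>) poison_dist) h"
  shows "1/4 \<le> err (clean_dist \<alpha>) h"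
proof -
  define u where "u = measure_pmf.prob (h 0 GA) {True}"
  define v where "v = measure_pmf.prob (h 1 GA) {True}"
  define w where "w = measure_pmf.prob (h 0 GB) {True}"
  have "w = ((1 - \<alpha>) * \<alpha> * u + \<alpha> * v) / ((1 - \<alpha>) * \<alpha> + \<alpha>)"
    using fair assms unfolding equal_opportunity_def u_def v_def w_def
    by (simp add: tpr_poisoned_GA tpr_poisoned_GB)
  then have "\<alpha> * (w * (2 - \<alpha>)) = \<alpha> * ((1 - \<alpha>) * u + v)"
    using assms by (simp add: field_simps)
  then have "w * (2 - \<alpha>) = (1 - \<alpha>) * u + v"
    using assms by simp
  then have "1/4 \<le> \<alpha> * (1 - u) + (1/2 - \<alpha>) * v + 1/2 * (1 - w)"
    using assms by (intro quarter_le_error_of_balanced_rates) (simp_all add: u_def v_def w_def)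
  then show ?thesis
    using assms by (simp add: err_clean_dist u_def v_def w_def)
qed

theorem mainTheorem8:
  shows "\<exists>c::real. c > 0 \<and> (\<exists>\<alpha>0::real. 0 < \<alpha>0 \<and> \<alpha>0 < 1 \<and>
    (\<forall>\<alpha>::real. 0 < \<alpha> \<and> \<alpha> \<le> \<alpha>0 \<longrightarrow>
      (\<exists>(D :: example pmf) (H :: hyp set) (hstar :: hyp) (Q :: example pmf).
         (\<forall>g. measure_pmf.prob D {(x, z, y). z = g \<and> y} > 0) \<and>
         hstar \<in> H \<and> equal_opportunity D hstar \<and>
         (\<forall>h\<in>H. equal_opportunity D h \<longrightarrow> err D hstar \<le> err D h) \<and>
         (\<forall>hhat :: hyp. equal_opportunity (mix_pmf \<alpha> D Q) hhat \<longrightarrow>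
            \<bar>err D hhat - err D hstar\<bar> \<ge> c * sqrt \<alpha>))))"
proof (intro exI[of _ "1/4"] conjI exI[of _ "1/4"] allI impI; (elim conjE)?)
  fix \<alpha> :: real
  assume \<alpha>: "0 < \<alpha>" "\<alpha> \<le> 1/4"
  have gap: "1/4 * sqrt \<alpha> \<le> \<bar>err (clean_dist \<alpha>) h - err (clean_dist \<alpha>) accept_zero\<bar>"
    if "equal_opportunity (mix_pmf \<alpha> (clean_dist \<alpha>) poison_dist) h" for h
  proof -
    have "sqrt \<alpha> \<le> 1/2"
      using \<alpha> real_sqrt_le_mono[of \<alpha> "1/4"] by (simp add: real_sqrt_divide)
    then show ?thesis
      using \<alpha> that err_clean_dist_ge_if_equal_opportunity_poisoned[of \<alpha> h]
      by (simp add: err_clean_dist_accept_zero)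
  qed
  show "\<exists>D H hstar Q.
      (\<forall>g. 0 < measure_pmf.prob D {(x, z, y). z = g \<and> y}) \<and>
      hstar \<in> H \<and> equal_opportunity D hstar \<and>
      (\<forall>h\<in>H. equal_opportunity D h \<longrightarrow> err D hstar \<le> err D h) \<and>
      (\<forall>hhat. equal_opportunity (mix_pmf \<alpha> D Q) hhat \<longrightarrow>
         1/4 * sqrt \<alpha> \<le> \<bar>err D hhat - err D hstar\<bar>)"
    using \<alpha> gap
    by (intro exI[of _ "clean_dist \<alpha>"] exI[of _ "{accept_zero}"] exI[of _ accept_zero]
        exI[of _ poison_dist])
       (auto simp: positive_mass_clean_dist[unfolded positive_mass_def] equal_opportunity_def
          tpr_clean_dist_accept_zero)
qed simp_all

end
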